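(* Let $I=\{x_1,\dots,x_n\}$ be a set of indices and $\prec$ a linear order on $I$. For any tensor $\phi$ with index set $I$, there exists a $\prec$-ordered normal TDD $\mathcal F$ such that $\Phi(\mathcal F)=\phi$.
   Context: Indices take values in $\{0,1\}$; a tensor over $I$ is a map $\{0,1\}^I\to\mathbb{C}$ (tensors over subsets of $I$ are regarded as tensors over $I$ not depending on the other indices). Each index $x$ is regarded as the tensor $x(c)=c$, and $\overline{x}(c):=1-c$; operations on tensors are pointwise. A TDD over $I$ is $\mathcal F=(V,E,index,value,low,high,w)$: a rooted directed acyclic graph with finite node set $V$ partitioned into non-terminal nodes $V_N$ and terminal nodes $V_T$, root $r_{\mathcal F}$; $index:V_N\to I$; $value:V_T\to\mathbb{C}$; $low,high:V_N\to V$; edges are the low-edges $(v,low(v))$ and high-edges $(v,high(v))$, $v\in V_N$, plus a unique source-less incoming edge $e_r$ of the root; $w$ gives each edge a complex weight and $w_{\mathcal F}:=w(e_r)$. Node tensors: $\Phi(v)=value(v)$ for terminal $v$; otherwise $\Phi(v)=w_0\overline{x_v}\Phi(low(v))+w_1x_v\Phi(high(v))$ with $x_v=index(v)$ and $w_0,w_1$ the low-/high-edge weights. The TDD represents $\Phi(\mathcal F):=w_{\mathcal F}\Phi(r_{\mathcal F})$. $\mathcal F$ is $\prec$-ordered if for every non-terminal node $v$, $index(v)\prec index(low(v))$ whenever $low(v)$ is non-terminal and $index(v)\prec index(high(v))$ whenever $high(v)$ is non-terminal. Normality (w.r.t. $\prec$): the pivot of a tensor $\phi$ is the lexicographically smallest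 (compare at the $\prec$-smallest differing index, $0<1$) $\vec a$ with $|\phi(\vec a)|=\max_{\vec b}|\phi(\vec b)|$; $\phi$ is normal if $\phi=0$ or $\phi$ equals $1$ at its pivot. A TDD is normal if $\Phi(v)$ is normal for every node $v$. *)

theory Defs
  imports Complex_Main
begin

text \<open>Index values 0/1 are modelled by False/True.\<close>

type_synonym 'i tensor = "('i \<Rightarrow> bool) \<Rightarrow> complex"

definition tensor_over :: "'i set \<Rightarrow> 'i tensor \<Rightarrow> bool" where
  "tensor_over I \<phi> \<longleftrightarrow> (\<forall>a b. (\<forall>i\<in>I. a i = b i) \<longrightarrow> \<phi> a = \<phi> b)"

text \<open>Canonical representatives of the elements of {0,1}^I.\<close>
definition assignments :: "'i set \<Rightarrow> ('i \<Rightarrow> bool) set" where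
  "assignments I = {a. \<forall>i. i \<notin> I \<longrightarrow> a i = False}"

definition lex_less :: "('i \<times> 'i) set \<Rightarrow> 'i set \<Rightarrow> ('i \<Rightarrow> bool) \<Rightarrow> ('i \<Rightarrow> bool) \<Rightarrow> bool" where
  "lex_less R I a b \<longleftrightarrow>
     (\<exists>i\<in>I. \<not> a i \<and> b i \<and> (\<forall>j\<in>I. (j, i) \<in> R \<longrightarrow> a j = b j))"

definition is_pivot :: "('i \<times> 'i) set \<Rightarrow> 'i set \<Rightarrow> 'i tensor \<Rightarrow> ('i \<Rightarrow> bool) \<Rightarrow> bool" where
  "is_pivot R I \<phi> p \<longleftrightarrow> p \<in> assignments I \<and>
     (\<forall>b\<in>assignments I. norm (\<phi> b) \<le> norm (\<phi> p)) \<and>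
     (\<forall>b\<in>assignments I. norm (\<phi> b) = norm (\<phi> p) \<longrightarrow> b = p \<or> lex_less R I p b)"

definition normal_tensor :: "('i \<times> 'i) set \<Rightarrow> 'i set \<Rightarrow> 'i tensor \<Rightarrow> bool" where
  "normal_tensor R I \<phi> \<longleftrightarrow> (\<forall>a\<in>assignments I. \<phi> a = 0) \<or>
     (\<exists>p. is_pivot R I \<phi> p \<and> \<phi> p = 1)"

text \<open>A TDD with node type 'v over index type 'i. Terminal nodes are
  nodes - nonterm. wlo v / whi v are the weights of the low/high edges of v,
  wroot is the weight of the incoming edge of the root.\<close>
record ('v, 'i) tdd =
  nodes :: "'v set"
  nonterm :: "'v set"
  root :: 'v
  idx :: "'v \<Rightarrow> 'i"
  val :: "'v \<Rightarrow> complex"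
  lo :: "'v \<Rightarrow> 'v"
  hi :: "'v \<Rightarrow> 'v"
  wlo :: "'v \<Rightarrow> complex"
  whi :: "'v \<Rightarrow> complex"
  wroot :: complex

definition tdd_edges :: "('v, 'i) tdd \<Rightarrow> ('v \<times> 'v) set" where
  "tdd_edges F = {(v, lo F v) | v. v \<in> nonterm F} \<union> {(v, hi F v) | v. v \<in> nonterm F}"

definition is_tdd :: "'i set \<Rightarrow> ('v, 'i) tdd \<Rightarrow> bool" where
  "is_tdd I F \<longleftrightarrow>
     finite (nodes F) \<and> nonterm F \<subseteq> nodes F \<and> root F \<in> nodes F \<and>
     (\<forall>v\<in>nonterm F. idx F v \<in> I \<and> lo F v \<in> nodes F \<and> hi F v \<in> nodes F) \<and>
     acyclic (tdd_edges F) \<and>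
     (\<forall>v\<in>nodes F. (root F, v) \<in> (tdd_edges F)\<^sup>*)"

inductive node_tensor_rel :: "('v, 'i) tdd \<Rightarrow> 'v \<Rightarrow> 'i tensor \<Rightarrow> bool" for F where
  term_node: "v \<in> nodes F \<Longrightarrow> v \<notin> nonterm F \<Longrightarrow> node_tensor_rel F v (\<lambda>_. val F v)"
| nonterm_node: "v \<in> nonterm F \<Longrightarrow> node_tensor_rel F (lo F v) t0 \<Longrightarrow> node_tensor_rel F (hi F v) t1 \<Longrightarrow>
    node_tensor_rel F v (\<lambda>a. (if a (idx F v) then 0 else 1) * wlo F v * t0 a
                             + (if a (idx F v) then 1 else 0) * whi F v * t1 a)"

definition node_tensor :: "('v, 'i) tdd \<Rightarrow> 'v \<Rightarrow> 'i tensor" where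
  "node_tensor F v = (THE t. node_tensor_rel F v t)"

definition tdd_tensor :: "('v, 'i) tdd \<Rightarrow> 'i tensor" where
  "tdd_tensor F = (\<lambda>a. wroot F * node_tensor F (root F) a)"

definition tdd_ordered :: "('i \<times> 'i) set \<Rightarrow> ('v, 'i) tdd \<Rightarrow> bool" where
  "tdd_ordered R F \<longleftrightarrow> (\<forall>v\<in>nonterm F.
     (lo F v \<in> nonterm F \<longrightarrow> (idx F v, idx F (lo F v)) \<in> R) \<and>
     (hi F v \<in> nonterm F \<longrightarrow> (idx F v, idx F (hi F v)) \<in> R))"

definition tdd_normal :: "('i \<times> 'i) set \<Rightarrow> 'i set \<Rightarrow> ('v, 'i) tdd \<Rightarrow> bool" where
  "tdd_normal R I F \<longleftrightarrow> (\<forall>v\<in>nodes F. normal_tensor R I (node_tensor F v))"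

end

theory Submission
  imports Defs "HOL-Library.Discrete_Functions"
begin

(* Enumerate I increasingly as x_0, ..., x_(n-1) and take the complete binary decision tree
   in heap numbering: node v has depth floor_log v, is labelled x_(floor_log v) and has low
   child 2v and high child 2v + 1; the nodes of depth n are terminal. The root carries the
   normalization of phi and every child the normalization of the corresponding cofactor of its
   parent's tensor, the pivot values divided out becoming the edge weights. So every node tensor
   is normal by construction, and the Shannon expansion of each node tensor into its two
   cofactors shows, bottom-up, that the node tensors are exactly these normalized tensors. *)

lemma strict_linear_order_on_least:
  assumes "strict_linear_order_on I R" and "finite A" and "A \<noteq> {}" and "A \<subseteq> I"
  shows "\<exists>l\<in>A. \<forall>x\<in>A. x \<noteq> l \<longrightarrow> (l, x) \<in> R"
proof (rule Finite_Set.bex_least_element)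
  show "transp_on A (\<lambda>x y. (x, y) \<in> R)"
    using assms(1) unfolding strict_linear_order_on_def transp_on_def trans_def by blast
  show "totalp_on A (\<lambda>x y. (x, y) \<in> R)"
    using assms(1,4) unfolding strict_linear_order_on_def totalp_on_def total_on_def by blast
qed (use assms in auto)

lemma ex_sorted_wrt_enumeration:
  assumes "finite I" and "strict_linear_order_on I R"
  shows "\<exists>xs. set xs = I \<and> sorted_wrt (\<lambda>x y. (x, y) \<in> R) xs"
  using assms(1)
proof (induction I rule: finite_remove_induct)
  case (remove A)
  obtain l where l: "l \<in> A" "\<forall>x\<in>A. x \<noteq> l \<longrightarrow> (l, x) \<in> R"
    using strict_linear_order_on_least[OF assms(2) remove(1,2,3)] by blast
  obtain xs where "set xs = A - {l}" "sorted_wrt (\<lambda>x y. (x, y) \<in> R) xs"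
    using remove.IH[OF l(1)] by blast
  then have "set (l # xs) = A \<and> sorted_wrt (\<lambda>x y. (x, y) \<in> R) (l # xs)"
    using l by auto
  then show ?case by blast
qed simp

lemma lex_less_trans:
  assumes "strict_linear_order_on I R" and "lex_less R I a b" and "lex_less R I b c"
  shows "lex_less R I a c"
proof -
  have tr: "trans R" and tot: "total_on I R"
    using assms(1) unfolding strict_linear_order_on_def by auto
  obtain i where i: "i \<in> I" "\<not> a i" "b i" "\<forall>k\<in>I. (k, i) \<in> R \<longrightarrow> a k = b k"
    using assms(2) unfolding lex_less_def by blast
  obtain j where j: "j \<in> I" "\<not> b j" "c j" "\<forall>k\<in>I. (k, j) \<in> R \<longrightarrow> b k = c k"
    using assms(3) unfolding lex_less_def by blast
  have "i \<noteq> j" using i j by auto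
  then consider "(i, j) \<in> R" | "(j, i) \<in> R"
    using tot i(1) j(1) unfolding total_on_def by blast
  then show ?thesis
  proof cases
    case 1
    then have "\<forall>k\<in>I. (k, i) \<in> R \<longrightarrow> a k = c k" and "c i"
      using i j tr by (auto dest: transD)
    then show ?thesis using i unfolding lex_less_def by blast
  next
    case 2
    then have "\<forall>k\<in>I. (k, j) \<in> R \<longrightarrow> a k = c k" and "\<not> a j"
      using i j tr by (auto dest: transD)
    then show ?thesis using j unfolding lex_less_def by blast
  qed
qed

lemma lex_less_total:
  assumes "finite I" and slo: "strict_linear_order_on I R"
    and "a \<in> assignments I" and "b \<in> assignments I" and "a \<noteq> b"
  shows "lex_less R I a b \<or> lex_less R I b a"
proof -
  define D where "D = {i\<in>I. a i \<noteq> b i}"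
  have "D \<noteq> {}"
    using assms(3-5) unfolding D_def assignments_def fun_eq_iff by blast
  then obtain m where m: "m \<in> D" "\<forall>j\<in>D. j \<noteq> m \<longrightarrow> (m, j) \<in> R"
    using strict_linear_order_on_least[OF slo, of D] assms(1) unfolding D_def by auto
  have "\<forall>j\<in>I. (j, m) \<in> R \<longrightarrow> a j = b j"
    using m slo unfolding D_def strict_linear_order_on_def irrefl_def by (auto dest: transD)
  then show ?thesis
    using m(1) unfolding D_def lex_less_def by (cases "a m") auto
qed

lemma finite_assignments:
  assumes "finite I"
  shows "finite (assignments I)"
proof -
  have "assignments I \<subseteq> (\<lambda>J i. i \<in> J) ` Pow I"
  proof
    fix a assume "a \<in> assignments I"
    then have "a = (\<lambda>i. i \<in> {i\<in>I. a i})" unfolding assignments_def by auto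
    then show "a \<in> (\<lambda>J i. i \<in> J) ` Pow I" by blast
  qed
  then show ?thesis using assms finite_subset by blast
qed

lemma ex_pivot:
  assumes fin: "finite I" and slo: "strict_linear_order_on I R"
  shows "\<exists>p. is_pivot R I \<chi> p"
proof -
  let ?S = "assignments I"
  have "finite ?S" and "?S \<noteq> {}"
    using finite_assignments[OF fin] unfolding assignments_def by auto
  then obtain g where g: "g \<in> ?S" "\<forall>b\<in>?S. norm (\<chi> b) \<le> norm (\<chi> g)"
    using Finite_Set.bex_greatest_element[of ?S "\<lambda>a b. norm (\<chi> a) \<le> norm (\<chi> b)"]
    unfolding transp_on_def totalp_on_def by force
  define T where "T = {b\<in>?S. norm (\<chi> b) = norm (\<chi> g)}"
  have "finite T" "T \<noteq> {}" using \<open>finite ?S\<close> g(1) unfolding T_def by auto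
  moreover have "transp_on T (lex_less R I)"
    using lex_less_trans[OF slo] unfolding transp_on_def by blast
  moreover have "totalp_on T (lex_less R I)"
    using lex_less_total[OF fin slo] unfolding totalp_on_def T_def by blast
  ultimately obtain p where "p \<in> T" "\<forall>b\<in>T. b \<noteq> p \<longrightarrow> lex_less R I p b"
    using Finite_Set.bex_least_element by metis
  then have "is_pivot R I \<chi> p"
    using g unfolding is_pivot_def T_def by auto
  then show ?thesis by blast
qed

definition pivot :: "('i \<times> 'i) set \<Rightarrow> 'i set \<Rightarrow> 'i tensor \<Rightarrow> ('i \<Rightarrow> bool)" where
  "pivot R I \<chi> = (SOME p. is_pivot R I \<chi> p)"

definition pivot_value :: "('i \<times> 'i) set \<Rightarrow> 'i set \<Rightarrow> 'i tensor \<Rightarrow> complex" where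
  "pivot_value R I \<chi> = \<chi> (pivot R I \<chi>)"

definition normalize_tensor :: "('i \<times> 'i) set \<Rightarrow> 'i set \<Rightarrow> 'i tensor \<Rightarrow> 'i tensor" where
  "normalize_tensor R I \<chi> = (\<lambda>a. \<chi> a / pivot_value R I \<chi>)"

definition cofactor :: "'i tensor \<Rightarrow> 'i \<Rightarrow> bool \<Rightarrow> 'i tensor" where
  "cofactor \<chi> x c = (\<lambda>a. \<chi> (a(x := c)))"

lemma is_pivot_pivot:
  assumes "finite I" and "strict_linear_order_on I R"
  shows "is_pivot R I \<chi> (pivot R I \<chi>)"
  unfolding pivot_def using ex_pivot[OF assms] by (rule someI_ex)

lemma is_pivot_divide:
  assumes "c \<noteq> 0"
  shows "is_pivot R I (\<lambda>b. \<chi> b / c) p \<longleftrightarrow> is_pivot R I \<chi> p"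
  using assms unfolding is_pivot_def by (simp add: norm_divide divide_le_cancel)

lemma normal_tensor_normalize_tensor:
  assumes "finite I" and "strict_linear_order_on I R"
  shows "normal_tensor R I (normalize_tensor R I \<chi>)"
proof (cases "pivot_value R I \<chi> = 0")
  case True
  then show ?thesis unfolding normal_tensor_def normalize_tensor_def by simp
next
  case False
  define p where "p = pivot R I \<chi>"
  have "\<chi> p \<noteq> 0" using False unfolding pivot_value_def p_def .
  moreover have "normalize_tensor R I \<chi> = (\<lambda>b. \<chi> b / \<chi> p)"
    unfolding normalize_tensor_def pivot_value_def p_def ..
  moreover have "is_pivot R I \<chi> p"
    unfolding p_def using is_pivot_pivot[OF assms] .
  ultimately have "is_pivot R I (normalize_tensor R I \<chi>) p" and "normalize_tensor R I \<chi> p = 1"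
    by (simp_all add: is_pivot_divide)
  then show ?thesis unfolding normal_tensor_def by blast
qed

(* If the pivot value vanishes then so does the whole tensor, which makes the
   junk quotient x / 0 = 0 in normalize_tensor harmless. *)
lemma pivot_value_mult_normalize_tensor:
  assumes "finite I" and "strict_linear_order_on I R" and "tensor_over I \<chi>"
  shows "pivot_value R I \<chi> * normalize_tensor R I \<chi> a = \<chi> a"
proof (cases "pivot_value R I \<chi> = 0")
  case True
  define a' where "a' = (\<lambda>i. i \<in> I \<and> a i)"
  have "a' \<in> assignments I" unfolding a'_def assignments_def by auto
  then have "norm (\<chi> a') \<le> norm (pivot_value R I \<chi>)"
    using is_pivot_pivot[OF assms(1,2)] unfolding is_pivot_def pivot_value_def by blast
  moreover have "\<chi> a = \<chi> a'" using assms(3) unfolding tensor_over_def a'_def by auto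
  ultimately show ?thesis using True by simp
qed (simp add: normalize_tensor_def)

lemma tensor_over_mono: "S \<subseteq> T \<Longrightarrow> tensor_over S \<chi> \<Longrightarrow> tensor_over T \<chi>"
  unfolding tensor_over_def by blast

lemma tensor_over_normalize_tensor: "tensor_over S \<chi> \<Longrightarrow> tensor_over S (normalize_tensor R I \<chi>)"
  unfolding tensor_over_def normalize_tensor_def by metis

lemma tensor_over_cofactor:
  assumes "tensor_over S \<chi>"
  shows "tensor_over (S - {x}) (cofactor \<chi> x c)"
  unfolding tensor_over_def cofactor_def
proof (intro allI impI)
  fix a b :: "'a \<Rightarrow> bool"
  assume "\<forall>i\<in>S - {x}. a i = b i"
  then have "\<forall>i\<in>S. (a(x := c)) i = (b(x := c)) i" by simp
  then show "\<chi> (a(x := c)) = \<chi> (b(x := c))"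
    using assms unfolding tensor_over_def by blast
qed

lemma normalized_shannon_expansion:
  assumes "finite I" and "strict_linear_order_on I R" and "tensor_over I \<chi>"
  shows "\<chi> a =
    (if a x then 0 else 1) * pivot_value R I (cofactor \<chi> x False) * normalize_tensor R I (cofactor \<chi> x False) a
    + (if a x then 1 else 0) * pivot_value R I (cofactor \<chi> x True) * normalize_tensor R I (cofactor \<chi> x True) a"
proof -
  have "tensor_over I (cofactor \<chi> x c)" for c
    using tensor_over_mono[OF _ tensor_over_cofactor[OF assms(3)]] by blast
  then have "pivot_value R I (cofactor \<chi> x c) * normalize_tensor R I (cofactor \<chi> x c) a = \<chi> (a(x := c))"
    for c using pivot_value_mult_normalize_tensor[OF assms(1,2)] unfolding cofactor_def by metis
  from this[of "a x"] show ?thesis by (cases "a x") (simp_all add: fun_upd_idem)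
qed

lemma node_tensor_rel_unique:
  "node_tensor_rel F v t \<Longrightarrow> node_tensor_rel F v t' \<Longrightarrow> t = t'"
proof (induction arbitrary: t' rule: node_tensor_rel.induct)
  case (term_node v)
  from term_node.prems show ?case
    by (cases rule: node_tensor_rel.cases) (use term_node.hyps in simp_all)
next
  case (nonterm_node v t0 t1)
  from nonterm_node.prems show ?case
  proof (cases rule: node_tensor_rel.cases)
    case (nonterm_node u0 u1)
    then have "t0 = u0" and "t1 = u1" using nonterm_node.IH by simp_all
    with nonterm_node show ?thesis by simp
  qed (use nonterm_node.hyps in simp)
qed

lemma node_tensor_eqI:
  assumes "node_tensor_rel F v t"
  shows "node_tensor F v = t"
  unfolding node_tensor_def using assms by (blast intro: node_tensor_rel_unique)

lemma floor_log_less_iff: "0 < v \<Longrightarrow> floor_log v < n \<longleftrightarrow> v < 2 ^ n"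
proof
  assume "floor_log v < n"
  have "v < 2 ^ Suc (floor_log v)" using floor_log_exp2_gt[of v] by simp
  also have "\<dots> \<le> 2 ^ n" using \<open>floor_log v < n\<close> by (intro power_increasing) auto
  finally show "v < 2 ^ n" .
next
  assume "0 < v" and "v < 2 ^ n"
  then have "2 ^ floor_log v < (2::nat) ^ n" using floor_log_exp2_le le_less_trans by blast
  then show "floor_log v < n" by simp
qed

lemma floor_log_twice_Suc: "n \<noteq> 0 \<Longrightarrow> floor_log (Suc (2 * n)) = Suc (floor_log n)"
  by (simp add: floor_log_rec)

lemma set_take_Suc_subset: "set (take (Suc k) xs) \<subseteq> insert (xs ! k) (set (take k xs))"
  by (cases "k < length xs") (auto simp: take_Suc_conv_app_nth)

fun heap_tensor :: "('i \<times> 'i) set \<Rightarrow> 'i set \<Rightarrow> 'i list \<Rightarrow> 'i tensor \<Rightarrow> nat \<Rightarrow> 'i tensor" where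
  [simp del]: "heap_tensor R I xs \<phi> v = (if v < 2 then normalize_tensor R I \<phi>
     else normalize_tensor R I (cofactor (heap_tensor R I xs \<phi> (v div 2)) (xs ! floor_log (v div 2)) (odd v)))"

lemma heap_tensor_root: "v < 2 \<Longrightarrow> heap_tensor R I xs \<phi> v = normalize_tensor R I \<phi>"
  by (simp add: heap_tensor.simps)

lemma heap_tensor_child:
  "2 \<le> v \<Longrightarrow> heap_tensor R I xs \<phi> v =
     normalize_tensor R I (cofactor (heap_tensor R I xs \<phi> (v div 2)) (xs ! floor_log (v div 2)) (odd v))"
  by (simp add: heap_tensor.simps)

lemma normal_tensor_heap_tensor:
  "finite I \<Longrightarrow> strict_linear_order_on I R \<Longrightarrow> normal_tensor R I (heap_tensor R I xs \<phi> v)"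
  by (simp add: heap_tensor.simps normal_tensor_normalize_tensor)

lemma tensor_over_heap_tensor:
  assumes "tensor_over I \<phi>" and "0 < v"
  shows "tensor_over (I - set (take (floor_log v) xs)) (heap_tensor R I xs \<phi> v)"
  using assms(2)
proof (induction v rule: floor_log_induct)
  case one
  show ?case using assms(1) by (simp add: heap_tensor_root tensor_over_normalize_tensor)
next
  case (double v)
  define k where "k = floor_log (v div 2)"
  have "I - set (take k xs) - {xs ! k} \<subseteq> I - set (take (floor_log v) xs)"
    unfolding floor_log_rec[OF double(1)] k_def[symmetric] using set_take_Suc_subset[of k xs] by blast
  moreover have "tensor_over (I - set (take k xs) - {xs ! k})
      (cofactor (heap_tensor R I xs \<phi> (v div 2)) (xs ! k) (odd v))"
    using double(2) unfolding k_def by (rule tensor_over_cofactor)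
  ultimately show ?case
    unfolding heap_tensor_child[OF double(1)] k_def
    by (rule tensor_over_normalize_tensor[OF tensor_over_mono])
qed

definition heap_tdd :: "('i \<times> 'i) set \<Rightarrow> 'i set \<Rightarrow> 'i list \<Rightarrow> 'i tensor \<Rightarrow> (nat, 'i) tdd" where
  "heap_tdd R I xs \<phi> =
    \<lparr>nodes = {1..<2 ^ Suc (length xs)}, nonterm = {1..<2 ^ length xs}, root = 1,
     idx = \<lambda>v. xs ! floor_log v, val = \<lambda>v. heap_tensor R I xs \<phi> v (\<lambda>_. False),
     lo = \<lambda>v. 2 * v, hi = \<lambda>v. 2 * v + 1,
     wlo = \<lambda>v. pivot_value R I (cofactor (heap_tensor R I xs \<phi> v) (xs ! floor_log v) False),
     whi = \<lambda>v. pivot_value R I (cofactor (heap_tensor R I xs \<phi> v) (xs ! floor_log v) True),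
     wroot = pivot_value R I \<phi>\<rparr>"

lemma heap_tdd_simps:
  "nodes (heap_tdd R I xs \<phi>) = {1..<2 ^ Suc (length xs)}"
  "nonterm (heap_tdd R I xs \<phi>) = {1..<2 ^ length xs}"
  "root (heap_tdd R I xs \<phi>) = 1"
  "idx (heap_tdd R I xs \<phi>) v = xs ! floor_log v"
  "val (heap_tdd R I xs \<phi>) v = heap_tensor R I xs \<phi> v (\<lambda>_. False)"
  "lo (heap_tdd R I xs \<phi>) v = 2 * v"
  "hi (heap_tdd R I xs \<phi>) v = 2 * v + 1"
  "wlo (heap_tdd R I xs \<phi>) v = pivot_value R I (cofactor (heap_tensor R I xs \<phi> v) (xs ! floor_log v) False)"
  "whi (heap_tdd R I xs \<phi>) v = pivot_value R I (cofactor (heap_tensor R I xs \<phi> v) (xs ! floor_log v) True)"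
  "wroot (heap_tdd R I xs \<phi>) = pivot_value R I \<phi>"
  by (simp_all add: heap_tdd_def)

lemma tdd_edges_heap_tdd:
  "tdd_edges (heap_tdd R I xs \<phi>) = {(v, w). v \<in> {1..<2 ^ length xs} \<and> (w = 2 * v \<or> w = 2 * v + 1)}"
  unfolding tdd_edges_def heap_tdd_simps by auto

lemma heap_tdd_root_reaches:
  assumes "0 < v" and "v < 2 ^ Suc (length xs)"
  shows "(1, v) \<in> (tdd_edges (heap_tdd R I xs \<phi>))\<^sup>*"
  using assms
proof (induction v rule: floor_log_induct)
  case (double v)
  have "(v div 2, v) \<in> tdd_edges (heap_tdd R I xs \<phi>)"
    using double by (auto simp: tdd_edges_heap_tdd)
  moreover have "(1, v div 2) \<in> (tdd_edges (heap_tdd R I xs \<phi>))\<^sup>*"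
    using double by simp
  ultimately show ?case by (rule rtrancl_into_rtrancl[rotated])
qed simp

lemma is_tdd_heap_tdd:
  assumes "set xs \<subseteq> I"
  shows "is_tdd I (heap_tdd R I xs \<phi>)"
proof -
  have "(1::nat) < 2 ^ Suc (length xs)" by (rule one_less_power) simp_all
  moreover have "xs ! floor_log v \<in> I" if "0 < v" and "v < 2 ^ length xs" for v
    using that assms floor_log_less_iff[of v "length xs"] by auto
  moreover have "acyclic (tdd_edges (heap_tdd R I xs \<phi>))"
    by (rule acyclic_subset[OF wf_acyclic[OF wf_less_than]]) (auto simp: tdd_edges_heap_tdd)
  moreover have "(root (heap_tdd R I xs \<phi>), v) \<in> (tdd_edges (heap_tdd R I xs \<phi>))\<^sup>*"
    if "v \<in> nodes (heap_tdd R I xs \<phi>)" for v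
    using that heap_tdd_root_reaches[of v xs] by (simp add: heap_tdd_simps)
  ultimately show ?thesis
    unfolding is_tdd_def by (auto simp: heap_tdd_simps)
qed

lemma tdd_ordered_heap_tdd:
  assumes "sorted_wrt (\<lambda>x y. (x, y) \<in> R) xs"
  shows "tdd_ordered R (heap_tdd R I xs \<phi>)"
proof -
  have "(xs ! k, xs ! Suc k) \<in> R" if "Suc k < length xs" for k
    using sorted_wrt_nth_less[OF assms, of k "Suc k"] that by simp
  moreover have "Suc (floor_log v) < length xs" if "0 < v" and "2 * v < 2 ^ length xs" for v
    using that floor_log_less_iff[of "2 * v" "length xs"] by simp
  ultimately show ?thesis
    unfolding tdd_ordered_def heap_tdd_simps by (auto simp: floor_log_twice_Suc)
qed

lemma node_tensor_rel_heap_tdd: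
  assumes fin: "finite I" and slo: "strict_linear_order_on I R"
    and tensor: "tensor_over I \<phi>" and covers: "I \<subseteq> set xs"
  shows "0 < v \<Longrightarrow> v < 2 ^ Suc (length xs) \<Longrightarrow>
    node_tensor_rel (heap_tdd R I xs \<phi>) v (heap_tensor R I xs \<phi> v)"
proof (induction "2 ^ Suc (length xs) - v" arbitrary: v rule: less_induct)
  case less
  let ?F = "heap_tdd R I xs \<phi>" and ?\<psi> = "heap_tensor R I xs \<phi>"
  show ?case
  proof (cases "v < 2 ^ length xs")
    case True
    have "v \<in> nonterm ?F" using less True by (simp add: heap_tdd_simps)
    moreover have "node_tensor_rel ?F (lo ?F v) (?\<psi> (2 * v))"
      and "node_tensor_rel ?F (hi ?F v) (?\<psi> (2 * v + 1))"
      using less True by (auto simp: heap_tdd_simps intro!: less.hyps)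
    ultimately have "node_tensor_rel ?F v (\<lambda>a.
        (if a (idx ?F v) then 0 else 1) * wlo ?F v * ?\<psi> (2 * v) a
      + (if a (idx ?F v) then 1 else 0) * whi ?F v * ?\<psi> (2 * v + 1) a)"
      by (rule node_tensor_rel.nonterm_node)
    moreover have "tensor_over I (?\<psi> v)"
      using tensor_over_heap_tensor[OF tensor less(2)] by (rule tensor_over_mono[rotated]) blast
    then have "(\<lambda>a. (if a (idx ?F v) then 0 else 1) * wlo ?F v * ?\<psi> (2 * v) a
      + (if a (idx ?F v) then 1 else 0) * whi ?F v * ?\<psi> (2 * v + 1) a) = ?\<psi> v"
      using less(2) normalized_shannon_expansion[OF fin slo]
      by (auto simp: heap_tdd_simps heap_tensor_child)
    ultimately show ?thesis by simp
  next
    case False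
    then have "floor_log v = length xs"
      using floor_log_less_iff[OF less(2)] less(3) by (meson less_SucE)
    then have "tensor_over {} (?\<psi> v)"
      using tensor_over_heap_tensor[OF tensor less(2), of xs R] Diff_eq_empty_iff[THEN iffD2, OF covers] by simp
    then have "?\<psi> v = (\<lambda>_. val ?F v)"
      unfolding tensor_over_def by (auto simp: heap_tdd_simps)
    moreover have "v \<in> nodes ?F" and "v \<notin> nonterm ?F"
      using less False by (auto simp: heap_tdd_simps)
    ultimately show ?thesis by (simp add: node_tensor_rel.term_node)
  qed
qed

lemma node_tensor_heap_tdd:
  assumes "finite I" and "strict_linear_order_on I R"
    and "tensor_over I \<phi>" and "I \<subseteq> set xs"
    and "v \<in> nodes (heap_tdd R I xs \<phi>)"
  shows "node_tensor (heap_tdd R I xs \<phi>) v = heap_tensor R I xs \<phi> v"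
  using assms(5)
  by (intro node_tensor_eqI node_tensor_rel_heap_tdd[OF assms(1-4)]) (simp_all add: heap_tdd_simps)

lemma tdd_normal_heap_tdd:
  assumes "finite I" and "strict_linear_order_on I R"
    and "tensor_over I \<phi>" and "I \<subseteq> set xs"
  shows "tdd_normal R I (heap_tdd R I xs \<phi>)"
  unfolding tdd_normal_def
  using node_tensor_heap_tdd[OF assms] normal_tensor_heap_tensor[OF assms(1,2)] by simp

lemma tdd_tensor_heap_tdd:
  assumes "finite I" and "strict_linear_order_on I R"
    and "tensor_over I \<phi>" and "I \<subseteq> set xs"
  shows "tdd_tensor (heap_tdd R I xs \<phi>) = \<phi>"
proof -
  have "(1::nat) < 2 ^ Suc (length xs)" by (rule one_less_power) simp_all
  then have "node_tensor (heap_tdd R I xs \<phi>) 1 = normalize_tensor R I \<phi>"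
    using node_tensor_heap_tdd[OF assms] by (simp add: heap_tdd_simps heap_tensor_root)
  then show ?thesis
    using pivot_value_mult_normalize_tensor[OF assms(1-3)]
    by (simp add: tdd_tensor_def heap_tdd_simps)
qed

theorem theorem2:
  fixes I :: "'i set" and R :: "('i \<times> 'i) set" and \<phi> :: "'i tensor"
  assumes "finite I"
    and "strict_linear_order_on I R"
    and "tensor_over I \<phi>"
  shows "\<exists>F :: (nat, 'i) tdd. is_tdd I F \<and> tdd_ordered R F \<and> tdd_normal R I F
           \<and> tdd_tensor F = \<phi>"
proof -
  obtain xs where xs: "set xs = I" "sorted_wrt (\<lambda>x y. (x, y) \<in> R) xs"
    using ex_sorted_wrt_enumeration[OF assms(1,2)] by blast
  then have "I \<subseteq> set xs" by simp
  let ?F = "heap_tdd R I xs \<phi>"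
  have "is_tdd I ?F" using xs(1) by (simp add: is_tdd_heap_tdd)
  moreover have "tdd_ordered R ?F" using xs(2) by (rule tdd_ordered_heap_tdd)
  moreover have "tdd_normal R I ?F" by (rule tdd_normal_heap_tdd[OF assms \<open>I \<subseteq> set xs\<close>])
  moreover have "tdd_tensor ?F = \<phi>" by (rule tdd_tensor_heap_tdd[OF assms \<open>I \<subseteq> set xs\<close>])
  ultimately show ?thesis by blast
qed

end
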